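(* Let $2\le r_1<r_2$ be integers, let $T=[h,q_1,q_2]\in\mathfrak{F}(n)$ with $h\ge3$, and let $\tilde T=[h',q_1',q_2']$ where either $h'=h-1$, $q_1'=q_1+1$, $q_2'=q_2$, or $h'=h-1$, $q_1'=q_1$, $q_2'=q_2+1$. Then $\rho(T)>\rho(\tilde T)$.
   Context: $\rho(G)$ denotes the spectral radius (largest eigenvalue of the adjacency matrix) of a graph $G$. For integers $h,q_1,q_2\ge 1$ and fixed integers $2\le r_1<r_2$, the tree $[h,q_1,q_2]$ is constructed as follows: take a vertex $u$; attach to $u$ a pendant path with $h$ edges; attach to $u$ a path with $q_1$ edges ending at a vertex $v_1$, and attach to $v_1$ exactly $r_1$ pendant paths with $2$ edges each; attach to $u$ a path with $q_2$ edges ending at a vertex $v_2$, and attach to $v_2$ exactly $r_2$ pendant paths with $2$ edges each. It has $n=1+h+q_1+q_2+2(r_1+r_2)$ vertices. $\mathfrak{F}(n)$ is the set of all such trees $[h,q_1,q_2]$ with $h,q_1,q_2\ge2$ and $h+q_1+q_2=n-1-2(r_1+r_2)$. The tree $\tilde T$ is obtained from $T$ by a 2-switch (removing two edges $ab,cd$ with $ac,bd$ non-edges and adding $ac,bd$), so it has the same degree sequence. *)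

theory Defs
  imports "Jordan_Normal_Form.Spectral_Radius"
begin

text \<open>Labelling:
  u = 0; pendant path 0-1-...-h;
  path 0-(h+1)-...-(h+q1), v1 = h+q1;
  path 0-(h+q1+1)-...-(h+q1+q2), v2 = h+q1+q2;
  for i < r1: edges v1-(b1+2i), (b1+2i)-(b1+2i+1), where b1 = h+q1+q2+1;
  for i < r2: edges v2-(b2+2i), (b2+2i)-(b2+2i+1), where b2 = b1+2 r1.\<close>

definition tree_order :: "nat \<Rightarrow> nat \<Rightarrow> nat \<Rightarrow> nat \<Rightarrow> nat \<Rightarrow> nat" where
  "tree_order r1 r2 h q1 q2 = 1 + h + q1 + q2 + 2 * (r1 + r2)"

definition tree_edges :: "nat \<Rightarrow> nat \<Rightarrow> nat \<Rightarrow> nat \<Rightarrow> nat \<Rightarrow> (nat \<times> nat) set" where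
  "tree_edges r1 r2 h q1 q2 =
     (let v1 = h + q1; v2 = h + q1 + q2; b1 = h + q1 + q2 + 1; b2 = b1 + 2 * r1 in
      {(i, i + 1) | i. i < h}
      \<union> {(0, h + 1) | _::unit. q1 \<ge> 1}
      \<union> {(h + i, h + i + 1) | i. 1 \<le> i \<and> i < q1}
      \<union> {(0, v1 + 1) | _::unit. q2 \<ge> 1}
      \<union> {(v1 + i, v1 + i + 1) | i. 1 \<le> i \<and> i < q2}
      \<union> {(v1, b1 + 2 * i) | i. i < r1} \<union> {(b1 + 2 * i, b1 + 2 * i + 1) | i. i < r1}
      \<union> {(v2, b2 + 2 * i) | i. i < r2} \<union> {(b2 + 2 * i, b2 + 2 * i + 1) | i. i < r2})"

definition tree_adj :: "nat \<Rightarrow> nat \<Rightarrow> nat \<Rightarrow> nat \<Rightarrow> nat \<Rightarrow> nat \<Rightarrow> nat \<Rightarrow> bool" where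
  "tree_adj r1 r2 h q1 q2 i j =
     ((i, j) \<in> tree_edges r1 r2 h q1 q2 \<or> (j, i) \<in> tree_edges r1 r2 h q1 q2)"

text \<open>Adjacency matrix (over the complex numbers, so that the library spectral radius applies).\<close>
definition tree_adj_mat :: "nat \<Rightarrow> nat \<Rightarrow> nat \<Rightarrow> nat \<Rightarrow> nat \<Rightarrow> complex mat" where
  "tree_adj_mat r1 r2 h q1 q2 =
     mat (tree_order r1 r2 h q1 q2) (tree_order r1 r2 h q1 q2)
       (\<lambda>(i, j). if tree_adj r1 r2 h q1 q2 i j then 1 else 0)"

definition tree_rho :: "nat \<Rightarrow> nat \<Rightarrow> nat \<Rightarrow> nat \<Rightarrow> nat \<Rightarrow> real" where
  "tree_rho r1 r2 h q1 q2 = spectral_radius (tree_adj_mat r1 r2 h q1 q2)"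

end

theory Submission
  imports Defs
begin

(* For t > 1 put lam t = t + 1/t.  Along a path the eigen-equations x(k+2) = lam t * x(k+1) - x(k)
   are solved by a t^k + b t^-k, so on each of the three branches at the root u they can be solved
   explicitly from the far end inwards: the pendant path gives t^(k+1) - t^-(k+1), and a path ending
   in a vertex with r pendant P2's gives coefficients a, b with b > 0 and a >= 0 once t is large.
   Gluing the branches gives a positive vector that is an eigenvector for lam t exactly when the
   defect at u vanishes, and then lam t is the spectral radius.  The defect is lam t minus the three
   ratios x(neighbour)/x(u); by Cassini's identity the ratio of the pendant path grows with its length
   while that of a broom branch does not, so moving a vertex from the pendant path to a branch lowers
   the defect.  Hence at the zero t1 of the defect of the new tree the defect of T is negative; as it
   is positive for large t, it vanishes at some t2 > t1, and rho(T) = lam t2 > lam t1. *)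

section \<open>Solutions of the path recurrence\<close>

definition lam :: "real \<Rightarrow> real" where
  "lam t = t + 1 / t"

lemma lam_pos: "0 < t \<Longrightarrow> 0 < lam t"
  unfolding lam_def by (simp add: add_pos_pos)

lemma lam_strict_mono:
  assumes "1 \<le> s" "s < t"
  shows "lam s < lam t"
proof -
  have "1 < s * t"
    using assms less_le_trans[of 1 t "s * t"] mult_right_mono[of 1 s t] by auto
  then have "0 < (t - s) * (1 - 1 / (s * t))"
    using assms by (simp add: mult_pos_pos)
  moreover have "lam t - lam s = (t - s) * (1 - 1 / (s * t))"
    using assms unfolding lam_def by (simp add: field_simps)
  ultimately show ?thesis by simp
qed

definition rec_sol :: "real \<Rightarrow> real \<Rightarrow> real \<Rightarrow> nat \<Rightarrow> real" where
  "rec_sol a b t k = a * t ^ k + b * (1 / t) ^ k"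

lemma rec_sol_step:
  "t \<noteq> 0 \<Longrightarrow> rec_sol a b t (Suc (Suc k)) = lam t * rec_sol a b t (Suc k) - rec_sol a b t k"
  unfolding rec_sol_def lam_def by (simp add: field_simps)

lemma rec_sol_pos: "0 \<le> a \<Longrightarrow> 0 < b \<Longrightarrow> 0 < t \<Longrightarrow> 0 < rec_sol a b t k"
  unfolding rec_sol_def by (simp add: add_nonneg_pos)

lemma rec_sol_shift:
  "t \<noteq> 0 \<Longrightarrow> t * rec_sol a b t k - rec_sol a b t (Suc k) = b * (1 / t) ^ k * (t - 1 / t)"
  unfolding rec_sol_def by (simp add: field_simps)

lemma rec_sol_cassini:
  "t \<noteq> 0 \<Longrightarrow>
    rec_sol a b t k * rec_sol a b t (Suc (Suc k)) = (rec_sol a b t (Suc k))\<^sup>2 + a * b * (t - 1 / t)\<^sup>2"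
  unfolding rec_sol_def by (simp add: field_simps power2_eq_square)

lemma rec_sol_ratio_diff:
  assumes "t \<noteq> 0" "rec_sol a b t (Suc k) \<noteq> 0" "rec_sol a b t (Suc (Suc k)) \<noteq> 0"
  shows "rec_sol a b t k / rec_sol a b t (Suc k) - rec_sol a b t (Suc k) / rec_sol a b t (Suc (Suc k))
    = a * b * (t - 1 / t)\<^sup>2 / (rec_sol a b t (Suc k) * rec_sol a b t (Suc (Suc k)))"
  using rec_sol_cassini[OF assms(1), of a b k] assms(2,3)
  by (simp add: field_simps power2_eq_square)

lemma rec_sol_twice_le:
  assumes t: "2 \<le> t" and ab: "0 \<le> a" "0 < b" "b \<le> a * (t\<^sup>2 - 2)"
  shows "2 * rec_sol a b t k \<le> t * rec_sol a b t (Suc k)"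
proof -
  have "b * (1 / t) ^ k \<le> b"
    using t ab by (simp add: mult_left_le power_le_one)
  also have "b \<le> a * (t\<^sup>2 - 2)" by (fact ab(3))
  also have "\<dots> \<le> a * (t\<^sup>2 - 2) * t ^ k"
    using t ab \<open>b \<le> a * (t\<^sup>2 - 2)\<close> by (simp add: mult_le_cancel_left1 one_le_power)
  also have "\<dots> - b * (1 / t) ^ k = t * rec_sol a b t (Suc k) - 2 * rec_sol a b t k"
    using t unfolding rec_sol_def by (simp add: field_simps power2_eq_square)
  finally show ?thesis by simp
qed

(* Values along a pendant path, indexed by the distance from its leaf; the equation at the leaf
   holds because the sequence vanishes at index -1. *)
definition pendant_val :: "real \<Rightarrow> nat \<Rightarrow> real" where
  "pendant_val t = rec_sol t (- 1 / t) t"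

lemma pendant_val_eq: "pendant_val t k = t ^ Suc k - (1 / t) ^ Suc k"
  unfolding pendant_val_def rec_sol_def by simp

(* Stated with Suc 0, the form in which simp leaves differences such as h - (h - 1). *)
lemma pendant_val_1: "t \<noteq> 0 \<Longrightarrow> pendant_val t (Suc 0) = lam t * pendant_val t 0"
  unfolding pendant_val_eq lam_def by (simp add: field_simps power2_eq_square)

lemma pendant_val_step:
  "t \<noteq> 0 \<Longrightarrow> pendant_val t (Suc (Suc k)) = lam t * pendant_val t (Suc k) - pendant_val t k"
  unfolding pendant_val_def by (rule rec_sol_step)

lemma inverse_less_self: "1 < t \<Longrightarrow> 1 / t < (t::real)"
  using less_trans[of "1 / t" 1 t] by simp

lemma pendant_val_pos:
  assumes "1 < t"
  shows "0 < pendant_val t k"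
proof -
  have "(1 / t) ^ Suc k < 1"
    by (rule power_Suc_less_one) (use assms in auto)
  moreover have "1 < t ^ Suc k"
    by (rule one_less_power) (use assms in auto)
  ultimately show ?thesis
    unfolding pendant_val_eq by linarith
qed

lemma pendant_val_ratio_less:
  assumes t: "1 < t"
  shows "pendant_val t k / pendant_val t (Suc k) < pendant_val t (Suc k) / pendant_val t (Suc (Suc k))"
proof -
  have "0 < (t - 1 / t)\<^sup>2 / (pendant_val t (Suc k) * pendant_val t (Suc (Suc k)))"
    using inverse_less_self[OF t] pendant_val_pos[OF t] by simp
  then show ?thesis
    using rec_sol_ratio_diff[of t t "- 1 / t" k] pendant_val_pos[OF t] t
    unfolding pendant_val_def by (simp add: less_imp_neq[symmetric])
qed

lemma pendant_val_ratio_less_inverse: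
  assumes t: "1 < t"
  shows "pendant_val t k / pendant_val t (Suc k) < 1 / t"
proof -
  have "t * pendant_val t k - pendant_val t (Suc k) < 0"
    using rec_sol_shift[of t t "- 1 / t" k] t inverse_less_self[OF t]
    unfolding pendant_val_def by (simp add: divide_pos_pos)
  then show ?thesis
    using t pendant_val_pos[OF t, of "Suc k"] by (simp add: field_simps)
qed

(* Values along a path ending in a vertex that carries r pendant P2's, indexed by the distance from
   that vertex.  The coefficients are forced by broom_val_0 and broom_val_1, the eigen-equations at
   the middle vertices of the P2's and at the vertex itself. *)
definition broom_a :: "nat \<Rightarrow> real \<Rightarrow> real" where
  "broom_a r t = t * ((lam t)\<^sup>2 - 1) - r * lam t"

definition broom_b :: "nat \<Rightarrow> real \<Rightarrow> real" where
  "broom_b r t = r * lam t - ((lam t)\<^sup>2 - 1) / t"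

definition broom_val :: "nat \<Rightarrow> real \<Rightarrow> nat \<Rightarrow> real" where
  "broom_val r t = rec_sol (broom_a r t) (broom_b r t) t"

lemma broom_val_0: "t \<noteq> 0 \<Longrightarrow> broom_val r t 0 = lam t * pendant_val t 1 - pendant_val t 0"
  unfolding broom_val_def pendant_val_def rec_sol_def broom_a_def broom_b_def lam_def
  by (simp add: field_simps power2_eq_square eval_nat_numeral)

lemma broom_val_1:
  "t \<noteq> 0 \<Longrightarrow> broom_val r t (Suc 0) = lam t * broom_val r t 0 - r * pendant_val t (Suc 0)"
  unfolding broom_val_def pendant_val_def rec_sol_def broom_a_def broom_b_def lam_def
  by (simp add: field_simps power2_eq_square)

lemma broom_val_step:
  "t \<noteq> 0 \<Longrightarrow> broom_val r t (Suc (Suc k)) = lam t * broom_val r t (Suc k) - broom_val r t k"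
  unfolding broom_val_def by (rule rec_sol_step)

lemma broom_a_eq:
  assumes "0 < t"
  shows "broom_a r t = lam t * (t\<^sup>2 + 1 / (t\<^sup>2 + 1) - r)"
proof -
  have "t\<^sup>2 + 1 \<noteq> 0"
    using zero_le_power2[of t] by linarith
  then have "lam t * (1 / (t\<^sup>2 + 1)) = 1 / t"
    using assms unfolding lam_def by (simp add: field_simps power2_eq_square)
  moreover have "t * ((lam t)\<^sup>2 - 1) = lam t * t\<^sup>2 + 1 / t"
    using assms unfolding lam_def by (simp add: field_simps power2_eq_square)
  ultimately show ?thesis
    unfolding broom_a_def by (simp add: algebra_simps)
qed

lemma broom_b_pos:
  assumes t: "1 < t" and r: "2 \<le> r"
  shows "0 < broom_b r t"
proof -
  have "(lam t)\<^sup>2 - 1 = 2 * lam t * t - (t\<^sup>2 + 1 - 1 / t\<^sup>2)"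
    using t unfolding lam_def by (simp add: field_simps power2_eq_square)
  moreover have "1 / t\<^sup>2 < 1"
    using t by (simp add: power_less_one_iff)
  ultimately have "(lam t)\<^sup>2 - 1 < 2 * lam t * t"
    using zero_le_power2[of t] by linarith
  then have "((lam t)\<^sup>2 - 1) / t < 2 * lam t"
    using t by (simp add: divide_less_eq mult.commute)
  also have "2 * lam t \<le> r * lam t"
    using r lam_pos[of t] t by (intro mult_right_mono) auto
  finally show ?thesis
    unfolding broom_b_def by simp
qed

lemma broom_val_pos: "1 < t \<Longrightarrow> 2 \<le> r \<Longrightarrow> 0 \<le> broom_a r t \<Longrightarrow> 0 < broom_val r t k"
  unfolding broom_val_def by (simp add: rec_sol_pos broom_b_pos)

lemma broom_a_antimono: "0 < t \<Longrightarrow> r1 \<le> r2 \<Longrightarrow> broom_a r2 t \<le> broom_a r1 t"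
  unfolding broom_a_def by (simp add: mult_right_mono lam_pos less_imp_le)

lemma broom_a_nonneg_mono:
  assumes st: "1 \<le> s" "s \<le> t" and nonneg: "0 \<le> broom_a r s"
  shows "0 \<le> broom_a r t"
proof -
  have "s\<^sup>2 \<le> t\<^sup>2"
    using st by (simp add: power_mono)
  have "1 \<le> s\<^sup>2 + 1" "1 \<le> t\<^sup>2 + 1"
    by simp_all
  then have D: "1 \<le> (s\<^sup>2 + 1) * (t\<^sup>2 + 1)"
    using mult_mono[of 1 "s\<^sup>2 + 1" 1 "t\<^sup>2 + 1"] by simp
  have "s\<^sup>2 + 1 \<noteq> 0" "t\<^sup>2 + 1 \<noteq> 0" "1 + s\<^sup>2 \<noteq> 0" "1 + t\<^sup>2 \<noteq> 0"
    using \<open>1 \<le> s\<^sup>2 + 1\<close> \<open>1 \<le> t\<^sup>2 + 1\<close> by linarith+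
  then have "1 / (s\<^sup>2 + 1) - 1 / (t\<^sup>2 + 1) = (t\<^sup>2 - s\<^sup>2) / ((s\<^sup>2 + 1) * (t\<^sup>2 + 1))"
    by (simp add: field_simps)
  also have "\<dots> \<le> (t\<^sup>2 - s\<^sup>2) / 1"
    using D \<open>s\<^sup>2 \<le> t\<^sup>2\<close> by (intro divide_left_mono) auto
  finally have "1 / (s\<^sup>2 + 1) - 1 / (t\<^sup>2 + 1) \<le> t\<^sup>2 - s\<^sup>2"
    by simp
  moreover have "r \<le> s\<^sup>2 + 1 / (s\<^sup>2 + 1)"
    using nonneg broom_a_eq[of s r] lam_pos[of s] st by (simp add: zero_le_mult_iff)
  ultimately have "0 \<le> t\<^sup>2 + 1 / (t\<^sup>2 + 1) - r"
    by linarith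
  then show ?thesis
    using broom_a_eq[of t r] lam_pos[of t] st by simp
qed

lemma broom_coeffs_large_t:
  assumes r: "2 \<le> r" and t: "real r + 1 \<le> t"
  shows "0 \<le> broom_a r t" "broom_b r t \<le> broom_a r t * (t\<^sup>2 - 2)"
proof -
  have t3: "3 \<le> t" using r t by simp
  have "3 * t \<le> t\<^sup>2"
    using t3 by (simp add: power2_eq_square mult_right_mono)
  then have le_r: "r \<le> t\<^sup>2 - r" and le_t: "1 \<le> t\<^sup>2 - 2"
    using t t3 by linarith+
  have lam: "3 \<le> lam t"
    using t3 divide_pos_pos[of 1 t] unfolding lam_def by linarith
  have a_ge: "lam t * (t\<^sup>2 - r) \<le> broom_a r t"
    using broom_a_eq[of t r] t3 lam by (simp add: mult_left_mono)
  moreover have "0 \<le> lam t * (t\<^sup>2 - r)"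
    using lam le_r by simp
  ultimately show "0 \<le> broom_a r t" by linarith
  have "t\<^sup>2 - r \<le> (t\<^sup>2 - r) * (t\<^sup>2 - 2)"
    using le_r le_t mult_left_mono[of 1 "t\<^sup>2 - 2" "t\<^sup>2 - r"] by simp
  then have M: "r \<le> (t\<^sup>2 - r) * (t\<^sup>2 - 2)"
    using le_r by linarith
  have "1 \<le> (lam t)\<^sup>2"
    using lam by (simp add: one_le_power)
  then have "broom_b r t \<le> r * lam t"
    using t3 unfolding broom_b_def by simp
  also have "\<dots> \<le> (t\<^sup>2 - r) * (t\<^sup>2 - 2) * lam t"
    by (rule mult_right_mono[OF M]) (use lam in simp)
  also have "\<dots> = lam t * (t\<^sup>2 - r) * (t\<^sup>2 - 2)"
    by simp
  also have "\<dots> \<le> broom_a r t * (t\<^sup>2 - 2)"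
    by (rule mult_right_mono[OF a_ge]) (use le_t in simp)
  finally show "broom_b r t \<le> broom_a r t * (t\<^sup>2 - 2)" .
qed

lemma broom_a_root:
  assumes r: "2 \<le> r"
  obtains t where "1 < t" "broom_a r t = 0"
proof -
  have neg: "broom_a r 1 < 0"
    using r unfolding broom_a_def lam_def by simp
  have "continuous_on {1..real r + 1} (broom_a r)"
    unfolding broom_a_def lam_def by (intro continuous_intros) auto
  then obtain t where "1 \<le> t" "broom_a r t = 0"
    using IVT'[of "broom_a r" 1 0 "real r + 1"] neg broom_coeffs_large_t[OF r] by auto
  moreover have "t \<noteq> 1"
    using neg \<open>broom_a r t = 0\<close> by auto
  ultimately show ?thesis
    by (metis that order.not_eq_order_implies_strict)
qed

lemma broom_val_ratio_le:
  assumes "1 < t" "2 \<le> r" "0 \<le> broom_a r t"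
  shows "broom_val r t (Suc k) / broom_val r t (Suc (Suc k)) \<le> broom_val r t k / broom_val r t (Suc k)"
proof -
  have "0 \<le> broom_a r t * broom_b r t * (t - 1 / t)\<^sup>2"
    using assms broom_b_pos[of t r] by (intro mult_nonneg_nonneg) auto
  then have "0 \<le> broom_a r t * broom_b r t * (t - 1 / t)\<^sup>2 / (broom_val r t (Suc k) * broom_val r t (Suc (Suc k)))"
    by (rule divide_nonneg_pos[OF _ mult_pos_pos[OF broom_val_pos[OF assms] broom_val_pos[OF assms]]])
  then show ?thesis
    using rec_sol_ratio_diff[of t "broom_a r t" "broom_b r t" k] broom_val_pos[OF assms] assms
    unfolding broom_val_def by (smt (verit))
qed

lemma broom_val_ratio_gt_inverse:
  assumes t: "1 < t" and "2 \<le> r" "0 \<le> broom_a r t"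
  shows "1 / t < broom_val r t k / broom_val r t (Suc k)"
proof -
  have "0 < t * broom_val r t k - broom_val r t (Suc k)"
    using rec_sol_shift[of t "broom_a r t" "broom_b r t" k] broom_b_pos[of t r] assms inverse_less_self[OF t]
    unfolding broom_val_def by simp
  then show ?thesis
    using t broom_val_pos[OF assms, of "Suc k"] by (simp add: field_simps)
qed

lemma broom_val_ratio_at_root:
  assumes "1 < t" "2 \<le> r" "broom_a r t = 0"
  shows "broom_val r t k / broom_val r t (Suc k) = t"
  using assms broom_b_pos[of t r] unfolding broom_val_def rec_sol_def by (simp add: field_simps)

lemma broom_val_ratio_le_half:
  assumes r: "2 \<le> r" and t: "real r + 1 \<le> t"
  shows "broom_val r t k / broom_val r t (Suc k) \<le> t / 2"
proof -
  have t1: "1 < t" using r t by simp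
  note coeffs = broom_coeffs_large_t[OF r t]
  have "2 * broom_val r t k \<le> t * broom_val r t (Suc k)"
    unfolding broom_val_def using r t coeffs broom_b_pos[OF t1 r] by (intro rec_sol_twice_le) auto
  then show ?thesis
    using broom_val_pos[OF t1 r coeffs(1), of "Suc k"] by (simp add: field_simps)
qed

section \<open>Spectral radius and positive eigenvectors\<close>

lemma mult_mat_vec_index_sum:
  "A \<in> carrier_mat n n \<Longrightarrow> v \<in> carrier_vec n \<Longrightarrow> i < n \<Longrightarrow> (A *\<^sub>v v) $ i = (\<Sum>j<n. A $$ (i, j) * v $ j)"
  by (simp add: mult_mat_vec_def scalar_prod_def lessThan_atLeast0)

lemma spectral_radius_le_of_supervector:
  fixes A :: "complex mat" and x :: "nat \<Rightarrow> real"
  assumes A: "A \<in> carrier_mat n n" and n: "0 < n"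
    and pos: "\<And>i. i < n \<Longrightarrow> 0 < x i"
    and super: "\<And>i. i < n \<Longrightarrow> (\<Sum>j<n. cmod (A $$ (i, j)) * x j) \<le> c * x i"
  shows "spectral_radius A \<le> c"
proof -
  obtain \<mu> where "\<mu> \<in> spectrum A" and rho: "spectral_radius A = cmod \<mu>"
    using spectral_radius_mem_max(1)[OF A n] by auto
  then obtain v where v: "v \<in> carrier_vec n" "v \<noteq> 0\<^sub>v n" and Av: "A *\<^sub>v v = \<mu> \<cdot>\<^sub>v v"
    using A unfolding spectrum_def eigenvalue_def eigenvector_def by auto
  define s where "s j = cmod (v $ j) / x j" for j
  obtain i where i: "i < n" and max: "\<And>j. j < n \<Longrightarrow> s j \<le> s i"
    using ex_is_arg_min_if_finite[of "{..<n}" "\<lambda>j. - s j"] n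
    unfolding is_arg_min_linorder by auto
  have bound: "cmod (v $ j) \<le> s i * x j" if "j < n" for j
    using max[OF that] pos[OF that] unfolding s_def by (simp add: divide_le_eq)
  have "0 < s i"
  proof (rule ccontr)
    assume "\<not> 0 < s i"
    then have "v $ j = 0" if "j < n" for j
      using bound[OF that] pos[OF that] by (smt (verit) mult_nonpos_nonneg norm_le_zero_iff)
    then have "v = 0\<^sub>v n"
      using v by (intro eq_vecI) auto
    with v show False by simp
  qed
  have vi: "cmod (v $ i) = s i * x i"
    using pos[OF i] unfolding s_def by simp
  have "cmod \<mu> * cmod (v $ i) = cmod (\<Sum>j<n. A $$ (i, j) * v $ j)"
    using Av i v A by (simp flip: mult_mat_vec_index_sum add: norm_mult)
  also have "\<dots> \<le> (\<Sum>j<n. cmod (A $$ (i, j)) * cmod (v $ j))"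
    by (rule order_trans[OF norm_sum]) (simp add: norm_mult)
  also have "\<dots> \<le> (\<Sum>j<n. cmod (A $$ (i, j)) * (s i * x j))"
    using bound by (intro sum_mono mult_left_mono) auto
  also have "\<dots> = s i * (\<Sum>j<n. cmod (A $$ (i, j)) * x j)"
    by (simp add: sum_distrib_left algebra_simps)
  also have "\<dots> \<le> s i * (c * x i)"
    using super[OF i] \<open>0 < s i\<close> by simp
  also have "\<dots> = c * cmod (v $ i)"
    using vi by simp
  finally show ?thesis
    using rho vi \<open>0 < s i\<close> pos[OF i] by simp
qed

lemma eigenvalue_of_eigenfunction:
  fixes A :: "'a::comm_ring_1 mat"
  assumes A: "A \<in> carrier_mat n n" and k: "k < n" "x k \<noteq> 0"
    and eq: "\<And>i. i < n \<Longrightarrow> (\<Sum>j<n. A $$ (i, j) * x j) = \<mu> * x i"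
  shows "eigenvalue A \<mu>"
proof -
  have "A *\<^sub>v vec n x = \<mu> \<cdot>\<^sub>v vec n x"
  proof (rule eq_vecI)
    fix i
    assume "i < dim_vec (\<mu> \<cdot>\<^sub>v vec n x)"
    then have i: "i < n" by simp
    have "(A *\<^sub>v vec n x) $ i = (\<Sum>j<n. A $$ (i, j) * vec n x $ j)"
      using A i by (intro mult_mat_vec_index_sum) auto
    also have "\<dots> = \<mu> * x i"
      using eq[OF i] by simp
    finally show "(A *\<^sub>v vec n x) $ i = (\<mu> \<cdot>\<^sub>v vec n x) $ i"
      using i by simp
  qed (use A in simp)
  moreover have "vec n x \<noteq> 0\<^sub>v n"
    using k by (metis index_vec index_zero_vec(1))
  ultimately have "eigenvector A (vec n x) \<mu>"
    using A unfolding eigenvector_def by simp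
  then show ?thesis
    unfolding eigenvalue_def by blast
qed

lemma spectral_radius_eq_of_positive_eigenvector:
  fixes A :: "complex mat" and a :: "nat \<Rightarrow> nat \<Rightarrow> real" and x :: "nat \<Rightarrow> real"
  assumes A: "A \<in> carrier_mat n n" and n: "0 < n"
    and entries: "\<And>i j. i < n \<Longrightarrow> j < n \<Longrightarrow> A $$ (i, j) = of_real (a i j)"
    and nonneg: "\<And>i j. 0 \<le> a i j"
    and pos: "\<And>i. i < n \<Longrightarrow> 0 < x i"
    and eigen: "\<And>i. i < n \<Longrightarrow> (\<Sum>j<n. a i j * x j) = c * x i"
  shows "spectral_radius A = c"
proof (rule antisym)
  have row: "(\<Sum>j<n. cmod (A $$ (i, j)) * x j) = c * x i" if "i < n" for i
  proof -
    have "(\<Sum>j<n. cmod (A $$ (i, j)) * x j) = (\<Sum>j<n. a i j * x j)"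
      using that nonneg by (intro sum.cong) (simp_all add: entries)
    also have "\<dots> = c * x i"
      by (rule eigen[OF that])
    finally show ?thesis .
  qed
  show "spectral_radius A \<le> c"
    by (rule spectral_radius_le_of_supervector[OF A n, of x]) (simp_all add: pos row)
  have "eigenvalue A (of_real c)"
  proof (rule eigenvalue_of_eigenfunction[OF A n])
    show "complex_of_real (x 0) \<noteq> 0"
      using pos[OF n] by simp
    show "(\<Sum>j<n. A $$ (i, j) * of_real (x j)) = of_real c * of_real (x i)" if "i < n" for i
      using eigen[OF that] that by (simp add: entries flip: of_real_mult of_real_sum)
  qed
  then have "\<bar>c\<bar> \<le> spectral_radius A"
    using spectral_radius_mem_max(2)[OF A n] unfolding spectrum_def by force
  then show "c \<le> spectral_radius A"
    by simp
qed

section \<open>The defect at the root\<close>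

(* lam t minus the neighbour sum at the root divided by the root value of tree_vec below. *)
definition root_defect :: "nat \<Rightarrow> nat \<Rightarrow> nat \<Rightarrow> nat \<Rightarrow> nat \<Rightarrow> real \<Rightarrow> real" where
  "root_defect r1 r2 h q1 q2 t = lam t - pendant_val t (h - 1) / pendant_val t h
     - broom_val r1 t (q1 - 1) / broom_val r1 t q1 - broom_val r2 t (q2 - 1) / broom_val r2 t q2"

lemma root_defect_neg_at_broom_root:
  assumes t: "1 < t" and r: "2 \<le> r1" "2 \<le> r2" and a: "0 \<le> broom_a r1 t" "broom_a r2 t = 0"
    and shape: "0 < h" "0 < q1" "0 < q2"
  shows "root_defect r1 r2 h q1 q2 t < 0"
proof -
  have "0 < pendant_val t (h - 1) / pendant_val t h"
    using pendant_val_pos[OF t] by simp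
  moreover have "1 / t < broom_val r1 t (q1 - 1) / broom_val r1 t q1"
    using broom_val_ratio_gt_inverse[OF t r(1) a(1), of "q1 - 1"] shape by simp
  moreover have "broom_val r2 t (q2 - 1) / broom_val r2 t q2 = t"
    using broom_val_ratio_at_root[OF t r(2) a(2), of "q2 - 1"] shape by simp
  ultimately show ?thesis
    unfolding root_defect_def lam_def by linarith
qed

lemma root_defect_pos_large_t:
  assumes r: "2 \<le> r1" "r1 \<le> r2" and t: "real r2 + 1 \<le> t" and shape: "0 < h" "0 < q1" "0 < q2"
  shows "0 < root_defect r1 r2 h q1 q2 t"
proof -
  have "pendant_val t (h - 1) / pendant_val t h < 1 / t"
    using pendant_val_ratio_less_inverse[of t "h - 1"] r t shape by simp
  moreover have "broom_val r1 t (q1 - 1) / broom_val r1 t q1 \<le> t / 2"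
    using broom_val_ratio_le_half[of r1 t "q1 - 1"] r t shape by simp
  moreover have "broom_val r2 t (q2 - 1) / broom_val r2 t q2 \<le> t / 2"
    using broom_val_ratio_le_half[of r2 t "q2 - 1"] r t shape by simp
  ultimately show ?thesis
    unfolding root_defect_def lam_def by linarith
qed

lemma root_defect_less_moved:
  assumes t: "1 < t" and r: "2 \<le> r1" "2 \<le> r2" and a: "0 \<le> broom_a r1 t" "0 \<le> broom_a r2 t"
    and shape: "2 \<le> h" "0 < q1" "0 < q2"
    and move: "(h' = h - 1 \<and> q1' = q1 + 1 \<and> q2' = q2) \<or> (h' = h - 1 \<and> q1' = q1 \<and> q2' = q2 + 1)"
  shows "root_defect r1 r2 h q1 q2 t < root_defect r1 r2 h' q1' q2' t"
proof -
  have pendant: "pendant_val t (h - 2) / pendant_val t (h - 1) < pendant_val t (h - 1) / pendant_val t h"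
    using pendant_val_ratio_less[OF t, of "h - 2"] shape by (simp add: numeral_2_eq_2 Suc_diff_Suc)
  have broom1: "broom_val r1 t q1 / broom_val r1 t (q1 + 1) \<le> broom_val r1 t (q1 - 1) / broom_val r1 t q1"
    using broom_val_ratio_le[OF t r(1) a(1), of "q1 - 1"] shape by simp
  have broom2: "broom_val r2 t q2 / broom_val r2 t (q2 + 1) \<le> broom_val r2 t (q2 - 1) / broom_val r2 t q2"
    using broom_val_ratio_le[OF t r(2) a(2), of "q2 - 1"] shape by simp
  from move show ?thesis
  proof (elim disjE conjE)
    assume "h' = h - 1" "q1' = q1 + 1" "q2' = q2"
    then have "root_defect r1 r2 h' q1' q2' t = lam t - pendant_val t (h - 2) / pendant_val t (h - 1)
        - broom_val r1 t q1 / broom_val r1 t (q1 + 1) - broom_val r2 t (q2 - 1) / broom_val r2 t q2"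
      unfolding root_defect_def by (simp add: numeral_2_eq_2)
    then show ?thesis
      unfolding root_defect_def using pendant broom1 by linarith
  next
    assume "h' = h - 1" "q1' = q1" "q2' = q2 + 1"
    then have "root_defect r1 r2 h' q1' q2' t = lam t - pendant_val t (h - 2) / pendant_val t (h - 1)
        - broom_val r1 t (q1 - 1) / broom_val r1 t q1 - broom_val r2 t q2 / broom_val r2 t (q2 + 1)"
      unfolding root_defect_def by (simp add: numeral_2_eq_2)
    then show ?thesis
      unfolding root_defect_def using pendant broom2 by linarith
  qed
qed

lemma root_defect_continuous:
  assumes a: "1 < a" and r: "2 \<le> r1" "r1 \<le> r2" "2 \<le> r2" and nonneg: "0 \<le> broom_a r2 a"
  shows "continuous_on {a..b} (root_defect r1 r2 h q1 q2)"
proof -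
  have nonzero: "pendant_val t h \<noteq> 0 \<and> broom_val r1 t q1 \<noteq> 0 \<and> broom_val r2 t q2 \<noteq> 0"
    if "t \<in> {a..b}" for t
  proof -
    have "1 < t" "0 \<le> broom_a r2 t"
      using that a broom_a_nonneg_mono[OF _ _ nonneg, of t] by auto
    moreover have "0 \<le> broom_a r1 t"
      using calculation broom_a_antimono[of t r1 r2] r by simp
    ultimately show ?thesis
      using pendant_val_pos broom_val_pos r by (metis less_irrefl)
  qed
  have "t \<noteq> 0" if "t \<in> {a..b}" for t
    using that a by auto
  then have cont: "continuous_on {a..b} (\<lambda>t. rec_sol (f t) (g t) t k)"
    if "continuous_on {a..b} f" "continuous_on {a..b} g" for f g k
    unfolding rec_sol_def using that by (intro continuous_intros) auto
  have "continuous_on {a..b} lam"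
    unfolding lam_def using \<open>\<And>t. t \<in> {a..b} \<Longrightarrow> t \<noteq> 0\<close> by (intro continuous_intros) auto
  then have "continuous_on {a..b} (broom_a r)" "continuous_on {a..b} (broom_b r)" for r
    unfolding broom_a_def broom_b_def using \<open>\<And>t. t \<in> {a..b} \<Longrightarrow> t \<noteq> 0\<close>
    by (intro continuous_intros; auto)+
  then show ?thesis
    unfolding root_defect_def pendant_val_def broom_val_def using nonzero
    by (intro continuous_intros cont \<open>continuous_on {a..b} lam\<close>) (use a in \<open>auto simp: pendant_val_def broom_val_def\<close>)
qed

lemma root_defect_root_above:
  assumes r: "2 \<le> r1" "r1 < r2" and shape: "0 < h" "0 < q1" "0 < q2"
    and s: "1 < s" "0 \<le> broom_a r2 s" "root_defect r1 r2 h q1 q2 s < 0"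
  obtains t where "s < t" "0 \<le> broom_a r2 t" "root_defect r1 r2 h q1 q2 t = 0"
proof -
  define b where "b = real r2 + 1"
  have "s \<le> b"
    using root_defect_pos_large_t[of r1 r2 s h q1 q2] r shape s(3) unfolding b_def by fastforce
  moreover have "0 < root_defect r1 r2 h q1 q2 b"
    using root_defect_pos_large_t r shape unfolding b_def by simp
  moreover have "continuous_on {s..b} (root_defect r1 r2 h q1 q2)"
    using root_defect_continuous[OF s(1)] r s(2) by simp
  ultimately obtain t where "s \<le> t" "root_defect r1 r2 h q1 q2 t = 0"
    using IVT'[of "root_defect r1 r2 h q1 q2" s 0 b] s(3) by auto
  moreover have "0 \<le> broom_a r2 t"
    using broom_a_nonneg_mono[OF _ _ s(2)] s(1) calculation(1) by simp
  moreover have "s \<noteq> t"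
    using s(3) calculation(2) by auto
  ultimately show ?thesis
    by (metis that order.not_eq_order_implies_strict)
qed

section \<open>Neighbourhoods in the tree\<close>

lemma double_neq_Suc_double: "2 * k \<noteq> Suc (2 * i)" "Suc (2 * k) \<noteq> 2 * (i::nat)"
  by presburger+

lemma offset_path_edges:
  "{(a + i, a + i + 1) | i. 1 \<le> i \<and> i < q} = {(i, Suc i) | i. a < i \<and> i < a + q}"
proof (rule Set.set_eqI, rule iffI)
  fix e
  assume "e \<in> {(a + i, a + i + 1) | i. 1 \<le> i \<and> i < q}"
  then show "e \<in> {(i, Suc i) | i. a < i \<and> i < a + q}"
    by auto
next
  fix e
  assume "e \<in> {(i, Suc i) | i. a < i \<and> i < a + q}"
  then obtain i where "e = (i, Suc i)" "a < i" "i < a + q"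
    by blast
  then have "e = (a + (i - a), a + (i - a) + 1) \<and> 1 \<le> i - a \<and> i - a < q"
    by auto
  then show "e \<in> {(a + i, a + i + 1) | i. 1 \<le> i \<and> i < q}"
    by blast
qed

lemma tree_edges_eq:
  assumes "1 \<le> q1" "1 \<le> q2"
  shows "tree_edges r1 r2 h q1 q2 =
    {(i, Suc i) | i. i < h \<or> h < i \<and> i < h + q1 \<or> h + q1 < i \<and> i < h + q1 + q2}
    \<union> {(0, h + 1), (0, h + q1 + 1)}
    \<union> {(h + q1, h + q1 + q2 + 1 + 2 * k) | k. k < r1}
    \<union> {(h + q1 + q2 + 1 + 2 * k, h + q1 + q2 + 2 + 2 * k) | k. k < r1}
    \<union> {(h + q1 + q2, h + q1 + q2 + 1 + 2 * r1 + 2 * k) | k. k < r2}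
    \<union> {(h + q1 + q2 + 1 + 2 * r1 + 2 * k, h + q1 + q2 + 2 + 2 * r1 + 2 * k) | k. k < r2}"
  using assms unfolding tree_edges_def Let_def offset_path_edges by auto

locale tree_shape =
  fixes r1 r2 h q1 q2 :: nat
  assumes shape: "2 \<le> h" "2 \<le> q1" "2 \<le> q2"
begin

abbreviation "adj \<equiv> tree_adj r1 r2 h q1 q2"
abbreviation "b1 \<equiv> h + q1 + q2 + 1"
abbreviation "b2 \<equiv> h + q1 + q2 + 1 + 2 * r1"

lemma edges_eq: "tree_edges r1 r2 h q1 q2 =
    {(i, Suc i) | i. i < h \<or> h < i \<and> i < h + q1 \<or> h + q1 < i \<and> i < h + q1 + q2}
    \<union> {(0, h + 1), (0, h + q1 + 1)}
    \<union> {(h + q1, b1 + 2 * k) | k. k < r1} \<union> {(b1 + 2 * k, b1 + 2 * k + 1) | k. k < r1}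
    \<union> {(h + q1 + q2, b2 + 2 * k) | k. k < r2} \<union> {(b2 + 2 * k, b2 + 2 * k + 1) | k. k < r2}"
  using tree_edges_eq[of q1 q2 r1 r2 h] shape by simp

lemmas adj_iff = tree_adj_def[of r1 r2 h q1 q2, unfolded edges_eq]

lemma adj_less: "adj i j \<Longrightarrow> j < tree_order r1 r2 h q1 q2"
  using shape unfolding adj_iff tree_order_def by auto

lemma nbrs_root: "{j. adj 0 j} = {1, h + 1, h + q1 + 1}"
  using shape unfolding adj_iff by auto

lemma nbrs_pendant: "0 < i \<Longrightarrow> i < h \<Longrightarrow> {j. adj i j} = {i - 1, i + 1}"
  using shape unfolding adj_iff by auto

lemma nbrs_pendant_end: "{j. adj h j} = {h - 1}"
  using shape unfolding adj_iff by auto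

lemma nbrs_branch1: "h < i \<Longrightarrow> i < h + q1 \<Longrightarrow> {j. adj i j} = {if i = h + 1 then 0 else i - 1, i + 1}"
  using shape unfolding adj_iff by auto

lemma nbrs_hub1: "{j. adj (h + q1) j} = insert (h + q1 - 1) ((\<lambda>k. b1 + 2 * k) ` {..<r1})"
  using shape unfolding adj_iff by auto

lemma nbrs_branch2:
  "h + q1 < i \<Longrightarrow> i < h + q1 + q2 \<Longrightarrow> {j. adj i j} = {if i = h + q1 + 1 then 0 else i - 1, i + 1}"
  using shape unfolding adj_iff by auto

lemma nbrs_hub2: "{j. adj (h + q1 + q2) j} = insert (h + q1 + q2 - 1) ((\<lambda>k. b2 + 2 * k) ` {..<r2})"
  using shape unfolding adj_iff by auto

lemma nbrs_mid1: "k < r1 \<Longrightarrow> {j. adj (b1 + 2 * k) j} = {h + q1, b1 + 2 * k + 1}"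
  using shape unfolding adj_iff by (auto simp: double_neq_Suc_double)

lemma nbrs_leaf1: "k < r1 \<Longrightarrow> {j. adj (b1 + 2 * k + 1) j} = {b1 + 2 * k}"
  using shape unfolding adj_iff by (auto simp: double_neq_Suc_double)

lemma nbrs_mid2: "k < r2 \<Longrightarrow> {j. adj (b2 + 2 * k) j} = {h + q1 + q2, b2 + 2 * k + 1}"
  using shape unfolding adj_iff by (auto simp: double_neq_Suc_double)

lemma nbrs_leaf2: "k < r2 \<Longrightarrow> {j. adj (b2 + 2 * k + 1) j} = {b2 + 2 * k}"
  using shape unfolding adj_iff by (auto simp: double_neq_Suc_double)

lemma vertex_cases:
  assumes "i < tree_order r1 r2 h q1 q2"
  obtains (root) "i = 0" | (pendant) "0 < i" "i \<le> h" | (branch1) "h < i" "i \<le> h + q1"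
    | (branch2) "h + q1 < i" "i \<le> h + q1 + q2"
    | (mid1) k where "k < r1" "i = b1 + 2 * k" | (leaf1) k where "k < r1" "i = b1 + 2 * k + 1"
    | (mid2) k where "k < r2" "i = b2 + 2 * k" | (leaf2) k where "k < r2" "i = b2 + 2 * k + 1"
proof -
  have "i \<le> h + q1 + q2 \<or> b1 \<le> i \<and> i < b2 \<or> b2 \<le> i \<and> i < b2 + 2 * r2"
    using assms unfolding tree_order_def by arith
  then consider "i \<le> h + q1 + q2" | "b1 \<le> i" "i < b2" | "b2 \<le> i" "i < b2 + 2 * r2"
    by blast
  then show ?thesis
  proof cases
    case 1
    then show ?thesis
      using root pendant branch1 branch2 by linarith
  next
    case 2
    then have "(i - b1) div 2 < r1" "i = b1 + 2 * ((i - b1) div 2) \<or> i = b1 + 2 * ((i - b1) div 2) + 1"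
      by auto
    then show ?thesis
      using mid1 leaf1 by blast
  next
    case 3
    then have "(i - b2) div 2 < r2" "i = b2 + 2 * ((i - b2) div 2) \<or> i = b2 + 2 * ((i - b2) div 2) + 1"
      by auto
    then show ?thesis
      using mid2 leaf2 by blast
  qed
qed

lemma row_sum_eq_sum_nbrs:
  fixes f :: "nat \<Rightarrow> real"
  shows "(\<Sum>j<tree_order r1 r2 h q1 q2. (if adj i j then 1 else 0) * f j) = sum f {j. adj i j}"
proof -
  have "(\<Sum>j<tree_order r1 r2 h q1 q2. (if adj i j then 1 else 0) * f j)
      = (\<Sum>j<tree_order r1 r2 h q1 q2. if adj i j then f j else 0)"
    by (rule sum.cong) auto
  also have "\<dots> = sum f {j \<in> {..<tree_order r1 r2 h q1 q2}. adj i j}"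
    by (rule sum.inter_filter[symmetric]) simp
  also have "{j \<in> {..<tree_order r1 r2 h q1 q2}. adj i j} = {j. adj i j}"
    using adj_less by auto
  finally show ?thesis .
qed

end

section \<open>The eigenvector\<close>

(* The three branch solutions, each scaled by the root values of the other two, so that all of
   them agree at the root 0. *)
definition tree_vec :: "nat \<Rightarrow> nat \<Rightarrow> nat \<Rightarrow> nat \<Rightarrow> nat \<Rightarrow> real \<Rightarrow> nat \<Rightarrow> real" where
  "tree_vec r1 r2 h q1 q2 t i =
    (let P = pendant_val t; Q1 = broom_val r1 t; Q2 = broom_val r2 t;
         b1 = h + q1 + q2 + 1; b2 = b1 + 2 * r1 in
     if i \<le> h then P (h - i) * Q1 q1 * Q2 q2
     else if i \<le> h + q1 then Q1 (h + q1 - i) * P h * Q2 q2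
     else if i \<le> h + q1 + q2 then Q2 (h + q1 + q2 - i) * P h * Q1 q1
     else if i < b2 then P (if even (i - b1) then 1 else 0) * P h * Q2 q2
     else P (if even (i - b2) then 1 else 0) * P h * Q1 q1)"

lemma tree_vec_pos:
  assumes "1 < t" "2 \<le> r1" "2 \<le> r2" "0 \<le> broom_a r1 t" "0 \<le> broom_a r2 t"
  shows "0 < tree_vec r1 r2 h q1 q2 t i"
  using assms by (simp add: tree_vec_def Let_def pendant_val_pos broom_val_pos)

locale tree_eigen = tree_shape +
  fixes t :: real
  assumes t_nonzero: "t \<noteq> 0"
begin

abbreviation "x \<equiv> tree_vec r1 r2 h q1 q2 t"
abbreviation "P \<equiv> pendant_val t"
abbreviation "Q1 \<equiv> broom_val r1 t"
abbreviation "Q2 \<equiv> broom_val r2 t"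

lemma x_pendant: "i \<le> h \<Longrightarrow> x i = P (h - i) * Q1 q1 * Q2 q2"
  by (simp add: tree_vec_def Let_def)

lemma x_branch1: "h < i \<Longrightarrow> i \<le> h + q1 \<Longrightarrow> x i = Q1 (h + q1 - i) * P h * Q2 q2"
  by (simp add: tree_vec_def Let_def)

lemma x_branch2: "h + q1 < i \<Longrightarrow> i \<le> h + q1 + q2 \<Longrightarrow> x i = Q2 (h + q1 + q2 - i) * P h * Q1 q1"
  by (simp add: tree_vec_def Let_def)

lemma x_broom1: "b1 \<le> i \<Longrightarrow> i < b2 \<Longrightarrow> x i = P (if even (i - b1) then 1 else 0) * P h * Q2 q2"
  by (simp add: tree_vec_def Let_def)

lemma x_broom2: "b2 \<le> i \<Longrightarrow> x i = P (if even (i - b2) then 1 else 0) * P h * Q1 q1"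
  by (simp add: tree_vec_def Let_def)

lemma eigen_eq_root:
  assumes "P h \<noteq> 0" "Q1 q1 \<noteq> 0" "Q2 q2 \<noteq> 0" and defect: "root_defect r1 r2 h q1 q2 t = 0"
  shows "sum x {j. adj 0 j} = lam t * x 0"
proof -
  have "sum x {j. adj 0 j} = x 1 + x (h + 1) + x (h + q1 + 1)"
    using shape by (simp add: nbrs_root)
  also have "\<dots> = P (h - 1) * Q1 q1 * Q2 q2 + Q1 (q1 - 1) * P h * Q2 q2 + Q2 (q2 - 1) * P h * Q1 q1"
    using shape by (simp add: x_pendant x_branch1 x_branch2)
  also have "\<dots> = (P (h - 1) / P h + Q1 (q1 - 1) / Q1 q1 + Q2 (q2 - 1) / Q2 q2) * (P h * Q1 q1 * Q2 q2)"
    using assms(1-3) by (simp add: field_simps)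
  also have "\<dots> = lam t * x 0"
    using defect by (simp add: root_defect_def x_pendant)
  finally show ?thesis .
qed

lemma eigen_eq_pendant:
  assumes "0 < i" "i \<le> h"
  shows "sum x {j. adj i j} = lam t * x i"
proof (cases "i = h")
  case True
  then show ?thesis
    using shape by (simp add: nbrs_pendant_end x_pendant pendant_val_1[OF t_nonzero])
next
  case False
  then obtain k where k: "h - i = Suc k"
    using assms by (cases "h - i") auto
  then have "h - (i - 1) = Suc (Suc k)" "h - (i + 1) = k"
    using assms by auto
  then have "sum x {j. adj i j} = (P (Suc (Suc k)) + P k) * Q1 q1 * Q2 q2"
    using assms False by (simp add: nbrs_pendant x_pendant algebra_simps)
  then show ?thesis
    using assms k by (simp add: pendant_val_step[OF t_nonzero] x_pendant)
qed

lemma eigen_eq_hub1: "sum x {j. adj (h + q1) j} = lam t * x (h + q1)"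
proof -
  have "h + q1 - 1 \<notin> (\<lambda>k. b1 + 2 * k) ` {..<r1}"
    by auto
  then have "sum x {j. adj (h + q1) j} = x (h + q1 - 1) + (\<Sum>k<r1. x (b1 + 2 * k))"
    by (simp add: nbrs_hub1 sum.reindex inj_on_def)
  then show ?thesis
    using shape by (simp add: x_branch1 x_broom1 broom_val_1[OF t_nonzero] algebra_simps)
qed

lemma eigen_eq_branch1:
  assumes "h < i" "i < h + q1"
  shows "sum x {j. adj i j} = lam t * x i"
proof -
  obtain k where k: "h + q1 - i = Suc k"
    using assms by (cases "h + q1 - i") auto
  define p where "p = (if i = h + 1 then 0 else i - 1)"
  have nbrs: "{j. adj i j} = {p, i + 1}"
    unfolding p_def by (rule nbrs_branch1) (use assms in auto)
  have "p \<noteq> i + 1"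
    unfolding p_def by auto
  have x_i: "x i = Q1 (Suc k) * P h * Q2 q2"
    using assms k by (simp add: x_branch1)
  have "h + q1 - (i + 1) = k" "i + 1 \<le> h + q1"
    using k by arith+
  then have x_next: "x (i + 1) = Q1 k * P h * Q2 q2"
    using assms by (simp add: x_branch1)
  have x_p: "x p = Q1 (Suc (Suc k)) * P h * Q2 q2"
  proof (cases "i = h + 1")
    case True
    then have "q1 = Suc (Suc k)"
      using k by arith
    then have "Q1 q1 = Q1 (Suc (Suc k))"
      by simp
    then show ?thesis
      using True unfolding p_def by (simp add: x_pendant)
  next
    case False
    then have "h + q1 - (i - 1) = Suc (Suc k)"
      using assms k by auto
    then show ?thesis
      using assms False unfolding p_def by (simp add: x_branch1)
  qed
  have "sum x {j. adj i j} = x p + x (i + 1)"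
    using \<open>p \<noteq> i + 1\<close> unfolding nbrs by simp
  also have "\<dots> = lam t * x i"
    unfolding x_p x_next x_i broom_val_step[OF t_nonzero] by (simp add: algebra_simps)
  finally show ?thesis .
qed

lemma eigen_eq_hub2: "sum x {j. adj (h + q1 + q2) j} = lam t * x (h + q1 + q2)"
proof -
  have "h + q1 + q2 - 1 \<notin> (\<lambda>k. b2 + 2 * k) ` {..<r2}"
    by auto
  then have "sum x {j. adj (h + q1 + q2) j} = x (h + q1 + q2 - 1) + (\<Sum>k<r2. x (b2 + 2 * k))"
    by (simp add: nbrs_hub2 sum.reindex inj_on_def)
  then show ?thesis
    using shape by (simp add: x_branch2 x_broom2 broom_val_1[OF t_nonzero] algebra_simps)
qed

lemma eigen_eq_branch2:
  assumes "h + q1 < i" "i < h + q1 + q2"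
  shows "sum x {j. adj i j} = lam t * x i"
proof -
  obtain k where k: "h + q1 + q2 - i = Suc k"
    using assms by (cases "h + q1 + q2 - i") auto
  define p where "p = (if i = h + q1 + 1 then 0 else i - 1)"
  have nbrs: "{j. adj i j} = {p, i + 1}"
    unfolding p_def by (rule nbrs_branch2) (use assms in auto)
  have "p \<noteq> i + 1"
    unfolding p_def by auto
  have x_i: "x i = Q2 (Suc k) * P h * Q1 q1"
    using assms k by (simp add: x_branch2)
  have "h + q1 + q2 - (i + 1) = k" "i + 1 \<le> h + q1 + q2"
    using k by arith+
  then have x_next: "x (i + 1) = Q2 k * P h * Q1 q1"
    using assms by (simp add: x_branch2)
  have x_p: "x p = Q2 (Suc (Suc k)) * P h * Q1 q1"
  proof (cases "i = h + q1 + 1")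
    case True
    then have "q2 = Suc (Suc k)"
      using k by arith
    then have "Q2 q2 = Q2 (Suc (Suc k))"
      by simp
    then show ?thesis
      using True unfolding p_def by (simp add: x_pendant)
  next
    case False
    then have "h + q1 + q2 - (i - 1) = Suc (Suc k)"
      using assms k by auto
    then show ?thesis
      using assms False unfolding p_def by (simp add: x_branch2)
  qed
  have "sum x {j. adj i j} = x p + x (i + 1)"
    using \<open>p \<noteq> i + 1\<close> unfolding nbrs by simp
  also have "\<dots> = lam t * x i"
    unfolding x_p x_next x_i broom_val_step[OF t_nonzero] by (simp add: algebra_simps)
  finally show ?thesis .
qed

lemma eigen_eq_mid1:
  assumes "k < r1"
  shows "sum x {j. adj (b1 + 2 * k) j} = lam t * x (b1 + 2 * k)"
proof -
  have "x (b1 + 2 * k + 1) = P 0 * P h * Q2 q2" "x (b1 + 2 * k) = P 1 * P h * Q2 q2"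
    using assms by (simp_all add: x_broom1)
  moreover have "sum x {j. adj (b1 + 2 * k) j} = x (h + q1) + x (b1 + 2 * k + 1)"
    unfolding nbrs_mid1[OF assms] by simp
  ultimately show ?thesis
    using shape by (simp add: x_branch1 broom_val_0[OF t_nonzero] algebra_simps)
qed

lemma eigen_eq_leaf1:
  assumes "k < r1"
  shows "sum x {j. adj (b1 + 2 * k + 1) j} = lam t * x (b1 + 2 * k + 1)"
proof -
  have "x (b1 + 2 * k + 1) = P 0 * P h * Q2 q2" "x (b1 + 2 * k) = P 1 * P h * Q2 q2"
    using assms by (simp_all add: x_broom1)
  then show ?thesis
    unfolding nbrs_leaf1[OF assms] by (simp add: pendant_val_1[OF t_nonzero])
qed

lemma eigen_eq_mid2:
  assumes "k < r2"
  shows "sum x {j. adj (b2 + 2 * k) j} = lam t * x (b2 + 2 * k)"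
proof -
  have "x (b2 + 2 * k + 1) = P 0 * P h * Q1 q1" "x (b2 + 2 * k) = P 1 * P h * Q1 q1"
    using assms by (simp_all add: x_broom2)
  moreover have "sum x {j. adj (b2 + 2 * k) j} = x (h + q1 + q2) + x (b2 + 2 * k + 1)"
    unfolding nbrs_mid2[OF assms] by simp
  ultimately show ?thesis
    using shape by (simp add: x_branch2 broom_val_0[OF t_nonzero] algebra_simps)
qed

lemma eigen_eq_leaf2:
  assumes "k < r2"
  shows "sum x {j. adj (b2 + 2 * k + 1) j} = lam t * x (b2 + 2 * k + 1)"
proof -
  have "x (b2 + 2 * k + 1) = P 0 * P h * Q1 q1" "x (b2 + 2 * k) = P 1 * P h * Q1 q1"
    using assms by (simp_all add: x_broom2)
  then show ?thesis
    unfolding nbrs_leaf2[OF assms] by (simp add: pendant_val_1[OF t_nonzero])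
qed

lemma eigen_eq:
  assumes "P h \<noteq> 0" "Q1 q1 \<noteq> 0" "Q2 q2 \<noteq> 0" "root_defect r1 r2 h q1 q2 t = 0"
    and i: "i < tree_order r1 r2 h q1 q2"
  shows "sum x {j. adj i j} = lam t * x i"
  using i
proof (cases rule: vertex_cases)
  case root
  then show ?thesis
    using eigen_eq_root[OF assms(1-4)] by simp
next
  case pendant
  then show ?thesis
    by (rule eigen_eq_pendant)
next
  case branch1
  then show ?thesis
    using eigen_eq_hub1 eigen_eq_branch1 by (cases "i = h + q1") auto
next
  case branch2
  then show ?thesis
    using eigen_eq_hub2 eigen_eq_branch2 by (cases "i = h + q1 + q2") auto
next
  case (mid1 k)
  show ?thesis
    unfolding mid1(2) by (rule eigen_eq_mid1[OF mid1(1)])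
next
  case (leaf1 k)
  show ?thesis
    unfolding leaf1(2) by (rule eigen_eq_leaf1[OF leaf1(1)])
next
  case (mid2 k)
  show ?thesis
    unfolding mid2(2) by (rule eigen_eq_mid2[OF mid2(1)])
next
  case (leaf2 k)
  show ?thesis
    unfolding leaf2(2) by (rule eigen_eq_leaf2[OF leaf2(1)])
qed

end

lemma tree_rho_eq_lam:
  assumes shape: "2 \<le> h" "2 \<le> q1" "2 \<le> q2" and t: "1 < t" and r: "2 \<le> r1" "2 \<le> r2"
    and a: "0 \<le> broom_a r1 t" "0 \<le> broom_a r2 t" and defect: "root_defect r1 r2 h q1 q2 t = 0"
  shows "tree_rho r1 r2 h q1 q2 = lam t"
proof -
  interpret tree_eigen r1 r2 h q1 q2 t
    using shape t by unfold_locales auto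
  have nonzero: "P h \<noteq> 0" "Q1 q1 \<noteq> 0" "Q2 q2 \<noteq> 0"
    using pendant_val_pos[OF t] broom_val_pos[OF t] r a by (metis less_irrefl)+
  show ?thesis
    unfolding tree_rho_def
  proof (rule spectral_radius_eq_of_positive_eigenvector[where a = "\<lambda>i j. if adj i j then 1 else 0"])
    show "tree_adj_mat r1 r2 h q1 q2 \<in> carrier_mat (tree_order r1 r2 h q1 q2) (tree_order r1 r2 h q1 q2)"
      "0 < tree_order r1 r2 h q1 q2"
      unfolding tree_adj_mat_def tree_order_def by simp_all
    show "\<And>i. i < tree_order r1 r2 h q1 q2 \<Longrightarrow> 0 < x i"
      using tree_vec_pos[OF t r a] by simp
    show "(\<Sum>j<tree_order r1 r2 h q1 q2. (if adj i j then 1 else 0) * x j) = lam t * x i"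
      if "i < tree_order r1 r2 h q1 q2" for i
      using eigen_eq[OF nonzero defect that] by (simp add: row_sum_eq_sum_nbrs)
  qed (simp_all add: tree_adj_mat_def)
qed

theorem theorem4p1:
  fixes r1 r2 h q1 q2 h' q1' q2' :: nat
  assumes "2 \<le> r1" and "r1 < r2"
    and "2 \<le> h" and "2 \<le> q1" and "2 \<le> q2"
    and "3 \<le> h"
    and "(h' = h - 1 \<and> q1' = q1 + 1 \<and> q2' = q2) \<or> (h' = h - 1 \<and> q1' = q1 \<and> q2' = q2 + 1)"
  shows "tree_rho r1 r2 h q1 q2 > tree_rho r1 r2 h' q1' q2'"
proof -
  note r = assms(1,2) and shape = assms(3-5) and move = assms(7)
  have r2: "2 \<le> r2" and shape': "2 \<le> h'" "2 \<le> q1'" "2 \<le> q2'"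
    using assms by auto
  obtain t0 where t0: "1 < t0" "broom_a r2 t0 = 0"
    using broom_a_root[OF r2] by blast
  have neg': "root_defect r1 r2 h' q1' q2' t0 < 0"
    using root_defect_neg_at_broom_root[OF t0(1) r(1) r2 _ t0(2)] broom_a_antimono[of t0 r1 r2] t0 r shape'
    by simp
  obtain t1 where t1: "t0 < t1" "0 \<le> broom_a r2 t1" "root_defect r1 r2 h' q1' q2' t1 = 0"
    by (rule root_defect_root_above[OF r _ _ _ t0(1) _ neg']) (use shape' t0 in auto)
  have "1 < t1" and a1: "0 \<le> broom_a r1 t1"
    using t0 t1 broom_a_antimono[of t1 r1 r2] r by auto
  have rho': "tree_rho r1 r2 h' q1' q2' = lam t1"
    by (rule tree_rho_eq_lam[OF shape' \<open>1 < t1\<close> r(1) r2 a1 t1(2,3)])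
  have neg: "root_defect r1 r2 h q1 q2 t1 < 0"
    using root_defect_less_moved[OF \<open>1 < t1\<close> r(1) r2 a1 t1(2) _ _ _ move] t1(3) shape by simp
  obtain t2 where t2: "t1 < t2" "0 \<le> broom_a r2 t2" "root_defect r1 r2 h q1 q2 t2 = 0"
    by (rule root_defect_root_above[OF r _ _ _ \<open>1 < t1\<close> t1(2) neg]) (use shape in auto)
  have "1 < t2" and a2: "0 \<le> broom_a r1 t2"
    using \<open>1 < t1\<close> t2 broom_a_antimono[of t2 r1 r2] r by auto
  have "tree_rho r1 r2 h q1 q2 = lam t2"
    by (rule tree_rho_eq_lam[OF shape \<open>1 < t2\<close> r(1) r2 a2 t2(2,3)])
  with rho' show ?thesis
    using lam_strict_mono[of t1 t2] \<open>1 < t1\<close> t2(1) by simp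
qed

end
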